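(* Every finite solvable group has the eigenvalue one property.
   Context: A finite group $K$ has the eigenvalue one property if for every irreducible non-trivial $\mathbb{R}K$-module $W$ of odd dimension, affording $\sigma\colon K\to\mathrm{GL}(W)$, and every $m\in N_{\mathrm{GL}(W)}(\sigma(K))$ of finite order, there is $k\in K$ such that $\sigma(k)m$ has eigenvalue $1$. *)

theory Defs
  imports "HOL-Analysis.Analysis" "HOL-Algebra.Solvable_Groups"
begin

primrec matpow :: "real^'n^'n \<Rightarrow> nat \<Rightarrow> real^'n^'n" where
  "matpow m 0 = mat 1"
| "matpow m (Suc j) = m ** matpow m j"

definition real_rep :: "('a, 'b) monoid_scheme \<Rightarrow> ('a \<Rightarrow> real^'n^'n) \<Rightarrow> bool" where
  "real_rep G \<sigma> \<longleftrightarrow>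
     (\<forall>x\<in>carrier G. invertible (\<sigma> x)) \<and>
     (\<forall>x\<in>carrier G. \<forall>y\<in>carrier G. \<sigma> (x \<otimes>\<^bsub>G\<^esub> y) = \<sigma> x ** \<sigma> y)"

definition irreducible_rep :: "('a, 'b) monoid_scheme \<Rightarrow> ('a \<Rightarrow> real^'n^'n) \<Rightarrow> bool" where
  "irreducible_rep G \<sigma> \<longleftrightarrow>
     (\<forall>U :: (real^'n) set. subspace U \<and> (\<forall>k\<in>carrier G. \<forall>u\<in>U. \<sigma> k *v u \<in> U)
        \<longrightarrow> U = {0} \<or> U = UNIV)"

definition nontrivial_rep :: "('a, 'b) monoid_scheme \<Rightarrow> ('a \<Rightarrow> real^'n^'n) \<Rightarrow> bool" where
  "nontrivial_rep G \<sigma> \<longleftrightarrow> (\<exists>k\<in>carrier G. \<sigma> k \<noteq> mat 1)"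

definition in_normalizer_GL :: "('a, 'b) monoid_scheme \<Rightarrow> ('a \<Rightarrow> real^'n^'n) \<Rightarrow> real^'n^'n \<Rightarrow> bool" where
  "in_normalizer_GL G \<sigma> m \<longleftrightarrow>
     invertible m \<and> (\<lambda>k. m ** \<sigma> k ** matrix_inv m) ` carrier G = \<sigma> ` carrier G"

definition has_finite_order :: "real^'n^'n \<Rightarrow> bool" where
  "has_finite_order m \<longleftrightarrow> (\<exists>j>0. matpow m j = mat 1)"

definition has_eigenvalue_one :: "real^'n^'n \<Rightarrow> bool" where
  "has_eigenvalue_one A \<longleftrightarrow> (\<exists>v. v \<noteq> 0 \<and> A *v v = v)"

text \<open>Eigenvalue one property, restricted to modules W of dimension CARD('n)
  (every n-dimensional real vector space is isomorphic to real^'n). The full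
  property is the conjunction over all finite index types 'n.\<close>
definition eigenvalue_one_property_dim :: "('a, 'b) monoid_scheme \<Rightarrow> ('n::finite) itself \<Rightarrow> bool" where
  "eigenvalue_one_property_dim G (TYPE('n::finite)) \<longleftrightarrow>
     (odd CARD('n) \<longrightarrow>
       (\<forall>(\<sigma> :: 'a \<Rightarrow> real^'n^'n) m.
          real_rep G \<sigma> \<and> irreducible_rep G \<sigma> \<and> nontrivial_rep G \<sigma> \<and>
          in_normalizer_GL G \<sigma> m \<and> has_finite_order m
          \<longrightarrow> (\<exists>k\<in>carrier G. has_eigenvalue_one (\<sigma> k ** m))))"

end

theory Submission
  imports Defs "HOL-Algebra.Multiplicative_Group" "Jordan_Normal_Form.Char_Poly"
begin

text \<open>
  The eigenvalue one property is proved in a more general form, by induction on dim V: for a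
  G-invariant subspace V of odd dimension on which G acts irreducibly and nontrivially, and a
  matrix h of finite order with h V \<subseteq> V and h\<inverse> \<sigma>(G) h \<subseteq> \<sigma>(G), some \<sigma>(k) h fixes a nonzero
  vector of V.

  The linear algebra behind it: an operator on a space of odd dimension has a real eigenvector,
  since its characteristic polynomial has odd degree, and for an operator of finite order the
  eigenvalue is \<plusminus>1. Splitting off the \<plusminus>1-eigenspaces, one of which must have odd dimension,
  a commuting family of operators of finite order has a common eigenvector with eigenvalues \<plusminus>1.

  Since G is solvable, a term N of its derived series acts on V nontrivially through commuting
  operators, so some \<plusminus>1-valued character l of N has a nonzero weight space. G permutes the weight
  spaces, and by irreducibility those in the orbit of l form a direct sum decomposition of V, so
  one of them, W, has odd dimension. If W = V, some element of N acts as -1, and an eigenvector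
  of h for the eigenvalue \<plusminus>1 is fixed by h or by that element composed with h. Otherwise h maps
  W to another weight space of the orbit, so \<sigma>(a)\<inverse> h preserves W for some a, and by Clifford's
  argument the stabilizer of W acts irreducibly on W: this is a smaller instance of the problem.
\<close>

text \<open>Jordan_Normal_Form's matrix constructor would otherwise shadow the identity matrix mat 1
  of HOL-Analysis; it is used qualified as Matrix.mat below.\<close>
hide_const (open) Matrix.mat

section \<open>Eigenvectors in odd dimension\<close>

lemma odd_degree_real_poly_has_root:
  fixes p :: "real poly"
  assumes "odd (degree p)"
  shows "\<exists>x. poly p x = 0"
proof -
  have root_if_lead_coeff_pos: "\<exists>x. poly q x = 0"
    if lc: "lead_coeff q > 0" and odd: "odd (degree q)" for q :: "real poly"
  proof -
    define r where "r = - pcompose q [:0, -1:]"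
    have "lead_coeff (pcompose q [:0, -1:]) = lead_coeff q * (-1) ^ degree q"
      using lead_coeff_comp[of "[:0, -1::real:]" q] by simp
    then have lc_r: "lead_coeff r = lead_coeff q"
      using odd by (simp add: r_def lead_coeff_minus)
    obtain b where b: "\<forall>x\<ge>b. poly q x \<ge> lead_coeff q"
      using poly_pinfty_gt_lc[OF lc] by blast
    obtain c where c: "\<forall>x\<ge>c. poly r x \<ge> lead_coeff r"
      using poly_pinfty_gt_lc[of r] lc_r lc by auto
    define t where "t = max 1 (max b c)"
    have "t \<ge> b" "t \<ge> c" by (simp_all add: t_def)
    then have pos: "poly q t > 0" "poly r t > 0" using b c lc lc_r by force+
    from pos(2) have "poly q (- t) < 0" by (simp add: r_def poly_pcompose)
    moreover have "- t < t" by (simp add: t_def)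
    ultimately show ?thesis using poly_IVT_pos[of "- t" t q] pos(1) by blast
  qed
  have "p \<noteq> 0" using assms by auto
  then consider "lead_coeff p > 0" | "lead_coeff (- p) > 0"
    by (metis lead_coeff_minus leading_coeff_0_iff neg_0_less_iff_less linorder_neqE_linordered_idom)
  then show ?thesis
    using root_if_lead_coeff_pos[of p] root_if_lead_coeff_pos[of "- p"] assms by auto
qed

lemma matrix_vector_mult_scaleR: "(M :: real^'n^'m) *v (c *\<^sub>R x) = c *\<^sub>R (M *v x)"
  by (rule linear_scale[OF matrix_vector_mul_linear])

lemma matrix_vector_mult_uminus: "(M :: real^'n^'m) *v (- x) = - (M *v x)"
  by (rule linear_neg[OF matrix_vector_mul_linear])

lemma matrix_vector_mult_sum: "(M :: real^'n^'m) *v sum f S = (\<Sum>x\<in>S. M *v f x)"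
  by (rule linear_sum[OF matrix_vector_mul_linear])

lemma independent_combination_eq_0:
  fixes f :: "nat \<Rightarrow> real^'n"
  assumes "independent B" and f: "bij_betw f {0..<d} B"
    and "(\<Sum>i\<in>{0..<d}. c i *\<^sub>R f i) = 0" and "i < d"
  shows "c i = 0"
proof -
  define c' where "c' b = c (inv_into {0..<d} f b)" for b
  have c'_f: "c' (f i) = c i" if "i < d" for i
    using bij_betw_inv_into_left[OF f] that by (simp add: c'_def)
  have "(\<Sum>b\<in>B. c' b *\<^sub>R b) = (\<Sum>i\<in>{0..<d}. c' (f i) *\<^sub>R f i)"
    using sum.reindex_bij_betw[OF f, of "\<lambda>b. c' b *\<^sub>R b"] by simp
  also have "\<dots> = 0" using assms(3) by (simp add: c'_f)
  finally have "\<forall>b\<in>B. c' b = 0" using assms(1) independent_explicit by blast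
  then show ?thesis using c'_f[OF \<open>i < d\<close>] f \<open>i < d\<close> by (auto simp: bij_betw_def)
qed

lemma matrix_vector_mult_basis_combination:
  fixes M :: "real^'n^'n" and f :: "nat \<Rightarrow> real^'n"
  assumes indep: "independent B" and f: "bij_betw f {0..<d} B"
    and M_span: "\<And>j. j < d \<Longrightarrow> M *v f j \<in> span B"
    and A_def: "A = Matrix.mat d d (\<lambda>(i, j). representation B (M *v f j) (f i))"
    and v: "v \<in> carrier_vec d"
  shows "M *v (\<Sum>j\<in>{0..<d}. vec_index v j *\<^sub>R f j) = (\<Sum>i\<in>{0..<d}. vec_index (A *\<^sub>v v) i *\<^sub>R f i)"
proof -
  have fin: "finite B" using indep finiteI_independent by blast
  have M_f: "M *v f j = (\<Sum>i\<in>{0..<d}. A $$ (i, j) *\<^sub>R f i)" if "j < d" for j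
  proof -
    have "M *v f j = (\<Sum>b\<in>B. representation B (M *v f j) b *\<^sub>R b)"
      using sum_representation_eq[OF indep M_span[OF that] fin] by simp
    also have "\<dots> = (\<Sum>i\<in>{0..<d}. representation B (M *v f j) (f i) *\<^sub>R f i)"
      using sum.reindex_bij_betw[OF f, of "\<lambda>b. representation B (M *v f j) b *\<^sub>R b"] by simp
    finally show ?thesis using that by (simp add: A_def)
  qed
  have A_v: "vec_index (A *\<^sub>v v) i = (\<Sum>j\<in>{0..<d}. A $$ (i, j) * vec_index v j)" if "i < d" for i
    using that v by (simp add: A_def scalar_prod_def)
  have "M *v (\<Sum>j\<in>{0..<d}. vec_index v j *\<^sub>R f j)
      = (\<Sum>j\<in>{0..<d}. \<Sum>i\<in>{0..<d}. (A $$ (i, j) * vec_index v j) *\<^sub>R f i)"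
    by (simp add: matrix_vector_mult_sum matrix_vector_mult_scaleR M_f scaleR_sum_right mult.commute)
  also have "\<dots> = (\<Sum>i\<in>{0..<d}. (\<Sum>j\<in>{0..<d}. A $$ (i, j) * vec_index v j) *\<^sub>R f i)"
    by (subst sum.swap) (simp add: scaleR_sum_left)
  also have "\<dots> = (\<Sum>i\<in>{0..<d}. vec_index (A *\<^sub>v v) i *\<^sub>R f i)"
    by (simp add: A_v)
  finally show ?thesis .
qed

lemma invariant_subspace_odd_dim_has_eigenvector:
  fixes M :: "real^'n^'n"
  assumes R: "subspace R" and M_R: "\<And>r. r \<in> R \<Longrightarrow> M *v r \<in> R" and odd: "odd (dim R)"
  shows "\<exists>r c. r \<in> R \<and> r \<noteq> 0 \<and> M *v r = c *\<^sub>R r"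
proof -
  obtain B where B_R: "B \<subseteq> R" and indep: "independent B" and R_B: "R \<subseteq> span B"
    and card_B: "card B = dim R"
    using basis_exists by blast
  define d where "d = card B"
  obtain f where f: "bij_betw f {0..<d} B"
    using ex_bij_betw_nat_finite[OF finiteI_independent[OF indep]] d_def by blast
  have f_B: "f i \<in> B" if "i < d" for i using f that by (auto simp: bij_betw_def)
  define A where "A = Matrix.mat d d (\<lambda>(i, j). representation B (M *v f j) (f i))"
  have A: "A \<in> carrier_mat d d" by (simp add: A_def)
  have "odd (degree (char_poly A))" using degree_monic_char_poly[OF A] odd card_B d_def by simp
  then obtain c where "poly (char_poly A) c = 0" using odd_degree_real_poly_has_root by blast
  then obtain v where v: "v \<in> carrier_vec d" "v \<noteq> 0\<^sub>v d" "A *\<^sub>v v = c \<cdot>\<^sub>v v"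
    using eigenvalue_root_char_poly[OF A] A unfolding eigenvalue_def eigenvector_def by auto
  define r where "r = (\<Sum>i\<in>{0..<d}. vec_index v i *\<^sub>R f i)"
  have "r \<in> R" unfolding r_def using f_B B_R by (intro subspace_sum[OF R] subspace_scale[OF R]) auto
  moreover have "r \<noteq> 0"
  proof
    assume "r = 0"
    then have "vec_index v i = 0" if "i < d" for i
      using independent_combination_eq_0[OF indep f _ that] by (simp add: r_def)
    then have "v = 0\<^sub>v d" using v(1) by (intro eq_vecI) auto
    with v(2) show False ..
  qed
  moreover have "M *v r = c *\<^sub>R r"
    using matrix_vector_mult_basis_combination[OF indep f _ A_def v(1)] f_B B_R R_B M_R v(1,3)
    by (auto simp: r_def scaleR_sum_right intro!: sum.cong)
  ultimately show ?thesis by blast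
qed

lemma matpow_add: "matpow M (a + b) = matpow M a ** matpow M b"
  by (induct a) (simp_all add: matrix_mul_assoc)

lemma matpow_mult: "matpow M (a * b) = matpow (matpow M a) b"
  by (induct b) (simp_all add: matpow_add)

lemma matpow_Suc_right: "matpow M (Suc k) = matpow M k ** M"
  using matpow_add[of M k 1] by simp

lemma matpow_commute:
  assumes "A ** B = B ** A" shows "A ** matpow B k = matpow B k ** A"
proof (induct k)
  case (Suc k)
  have "A ** matpow B (Suc k) = B ** (A ** matpow B k)"
    by (simp add: matrix_mul_assoc assms)
  also have "\<dots> = B ** (matpow B k ** A)" using Suc by simp
  also have "\<dots> = matpow B (Suc k) ** A" by (simp add: matrix_mul_assoc)
  finally show ?case .
qed simp

lemma matpow_eigenvector: "M *v v = c *\<^sub>R v \<Longrightarrow> matpow M k *v v = c ^ k *\<^sub>R v"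
  by (induct k) (simp_all add: matrix_vector_mul_assoc[symmetric] matrix_vector_mult_scaleR)

lemma matpow_invariant:
  "(\<And>v. v \<in> V \<Longrightarrow> M *v v \<in> V) \<Longrightarrow> v \<in> V \<Longrightarrow> matpow M k *v v \<in> V"
  by (induct k) (simp_all add: matrix_vector_mul_assoc[symmetric])

lemma matpow_mat_1: "matpow (mat 1) k = mat 1"
  by (induct k) simp_all

lemma has_finite_order_inverse:
  assumes "has_finite_order M"
  obtains i where "M ** matpow M i = mat 1" and "matpow M i ** M = mat 1"
proof -
  obtain j where "j > 0" "matpow M j = mat 1" using assms by (auto simp: has_finite_order_def)
  then obtain i where "matpow M (Suc i) = mat 1" by (metis gr0_implies_Suc)
  then show thesis using that matpow_Suc_right[of M i] by simp
qed

lemma has_finite_order_kernel: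
  assumes "has_finite_order M" and "M *v v = 0"
  shows "v = 0"
proof -
  obtain i where "matpow M i ** M = mat 1" using has_finite_order_inverse[OF assms(1)] by blast
  then have "v = matpow M i *v (M *v v)" by (simp add: matrix_vector_mul_assoc)
  then show ?thesis using assms(2) by simp
qed

lemma has_finite_order_eigenvalue:
  assumes "has_finite_order M" and "M *v v = c *\<^sub>R v" and "v \<noteq> 0"
  shows "c = 1 \<or> c = -1"
proof -
  obtain j where j: "j > 0" "matpow M j = mat 1" using assms(1) by (auto simp: has_finite_order_def)
  have "c ^ j *\<^sub>R v = 1 *\<^sub>R v" using matpow_eigenvector[OF assms(2), of j] j(2) by simp
  then have "c ^ j = 1" using assms(3) scaleR_cancel_right by blast
  then have "\<bar>c\<bar> = 1" using power_eq_1_iff[of c j] j(1) by simp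
  then show ?thesis by linarith
qed

lemma subspace_eigenspace: "subspace V \<Longrightarrow> subspace {v \<in> V. (M :: real^'n^'n) *v v = c *\<^sub>R v}"
  unfolding subspace_def
  by (auto simp: matrix_vector_right_distrib matrix_vector_mult_scaleR scaleR_add_right mult.commute)

lemma dim_direct_sum:
  fixes A B :: "'a::euclidean_space set"
  assumes "subspace A" "subspace B" "A \<inter> B \<subseteq> {0}"
  shows "dim {x + y |x y. x \<in> A \<and> y \<in> B} = dim A + dim B"
proof -
  have "dim (A \<inter> B) = 0" using assms(3) by simp
  then show ?thesis using dim_sums_Int[OF assms(1,2)] by linarith
qed

definition cyclic_average :: "real^'n^'n \<Rightarrow> nat \<Rightarrow> real^'n \<Rightarrow> real^'n" where
  "cyclic_average Y j v = (\<Sum>i<j. matpow Y i *v v)"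

lemma linear_cyclic_average: "linear (cyclic_average Y j)"
  unfolding cyclic_average_def by (intro linear_compose_sum) simp

lemma cyclic_average_fixed: "Y *v v = v \<Longrightarrow> cyclic_average Y j v = real j *\<^sub>R v"
proof -
  assume "Y *v v = v"
  then have "cyclic_average Y j v = (\<Sum>i<j. v)"
    unfolding cyclic_average_def using matpow_eigenvector[of Y v 1] by (intro sum.cong) auto
  then show ?thesis by (simp only: sum_constant_scaleR card_lessThan)
qed

lemma cyclic_average_absorbs:
  assumes "matpow Y j = mat 1" and "j > 0"
  shows "Y *v cyclic_average Y j v = cyclic_average Y j v"
proof -
  obtain n where n: "j = Suc n" using assms(2) gr0_implies_Suc by blast
  have "Y *v cyclic_average Y j v = (\<Sum>i<Suc n. matpow Y (Suc i) *v v)"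
    unfolding cyclic_average_def matrix_vector_mult_sum n
    by (simp add: matrix_vector_mul_assoc del: sum.lessThan_Suc)
  also have "\<dots> = (\<Sum>i<n. matpow Y (Suc i) *v v) + matpow Y 0 *v v"
    using assms(1) n by (simp only: sum.lessThan_Suc) simp
  also have "\<dots> = cyclic_average Y j v"
    by (simp only: cyclic_average_def n sum.lessThan_Suc_shift add.commute)
  finally show ?thesis .
qed

lemma cyclic_average_commute:
  "A ** Y = Y ** A \<Longrightarrow> A *v cyclic_average Y j v = cyclic_average Y j (A *v v)"
  using matpow_commute[of A Y]
  by (simp add: cyclic_average_def matrix_vector_mult_sum matrix_vector_mul_assoc)

lemma cyclic_average_invariant:
  "subspace V \<Longrightarrow> (\<And>v. v \<in> V \<Longrightarrow> Y *v v \<in> V) \<Longrightarrow> v \<in> V \<Longrightarrow> cyclic_average Y j v \<in> V"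
  unfolding cyclic_average_def using matpow_invariant[of V Y] by (intro subspace_sum) auto

lemma dim_fixed_space_plus_average_kernel:
  fixes Y :: "real^'n^'n"
  assumes V: "subspace V" and Y_V: "\<And>v. v \<in> V \<Longrightarrow> Y *v v \<in> V"
    and Y_j: "matpow Y j = mat 1" and j: "j > 0"
  shows "dim V = dim {v \<in> V. Y *v v = v} + dim {v \<in> V. cyclic_average Y j v = 0}"
proof -
  define K where "K = {v \<in> V. Y *v v = v}"
  define R where "R = {v \<in> V. cyclic_average Y j v = 0}"
  note P = linear_cyclic_average[of Y j]
  have K: "subspace K" unfolding K_def using subspace_eigenspace[OF V, of Y 1] by simp
  have R: "subspace R"
    unfolding R_def using subspace_inter[OF V linear_subspace_kernel[OF P]] by (simp add: Int_def)
  have KR: "K \<inter> R \<subseteq> {0}"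
  proof
    fix v assume "v \<in> K \<inter> R"
    then have "real j *\<^sub>R v = 0" using cyclic_average_fixed[of Y v j] by (simp add: K_def R_def)
    then show "v \<in> {0}" using j by simp
  qed
  have "V = {x + y |x y. x \<in> K \<and> y \<in> R}"
  proof (intro subset_antisym subsetI)
    fix v assume v: "v \<in> V"
    define x where "x = (1 / real j) *\<^sub>R cyclic_average Y j v"
    have "x \<in> K"
      using cyclic_average_invariant[OF V Y_V v] cyclic_average_absorbs[OF Y_j j] subspace_scale[OF V]
      by (auto simp: x_def K_def matrix_vector_mult_scaleR)
    moreover have "cyclic_average Y j x = cyclic_average Y j v"
      using cyclic_average_fixed[OF cyclic_average_absorbs[OF Y_j j]] j
      by (simp add: x_def linear_scale[OF P])
    then have "v - x \<in> R"
      using subspace_diff[OF V v] \<open>x \<in> K\<close> by (auto simp: R_def K_def linear_diff[OF P])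
    ultimately show "v \<in> {x + y |x y. x \<in> K \<and> y \<in> R}" by force
  qed (use subspace_add[OF V] in \<open>auto simp: K_def R_def\<close>)
  then show ?thesis using dim_direct_sum[OF K R KR] unfolding K_def R_def by simp
qed

lemma dim_square_fixed_space:
  fixes M :: "real^'n^'n"
  assumes V: "subspace V" and M_V: "\<And>v. v \<in> V \<Longrightarrow> M *v v \<in> V"
  shows "dim {v \<in> V. (M ** M) *v v = v} = dim {v \<in> V. M *v v = v} + dim {v \<in> V. M *v v = - v}"
proof -
  define K where "K = {v \<in> V. (M ** M) *v v = v}"
  define Kp where "Kp = {v \<in> V. M *v v = v}"
  define Km where "Km = {v \<in> V. M *v v = - v}"
  have Kp: "subspace Kp" unfolding Kp_def using subspace_eigenspace[OF V, of M 1] by simp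
  have Km: "subspace Km" unfolding Km_def using subspace_eigenspace[OF V, of M "-1"] by simp
  have "Kp \<inter> Km \<subseteq> {0}"
    by (auto simp: Kp_def Km_def eq_neg_iff_add_eq_0 scaleR_2[symmetric])
  moreover have "K = {x + y |x y. x \<in> Kp \<and> y \<in> Km}"
  proof (intro subset_antisym subsetI)
    fix v assume v: "v \<in> K"
    then have v_V: "v \<in> V" and MMv: "M *v (M *v v) = v"
      by (simp_all add: K_def matrix_vector_mul_assoc)
    define x where "x = (1/2) *\<^sub>R (v + M *v v)"
    define y where "y = (1/2) *\<^sub>R (v - M *v v)"
    have "x \<in> Kp" "y \<in> Km"
      using v_V M_V MMv subspace_add[OF V] subspace_diff[OF V] subspace_scale[OF V]
      by (auto simp: x_def y_def Kp_def Km_def matrix_vector_mult_scaleR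
          matrix_vector_right_distrib matrix_vector_mult_diff_distrib scaleR_diff_right)
    moreover have "v = x + y"
      by (simp add: x_def y_def scaleR_add_right[symmetric] scaleR_2[symmetric])
    ultimately show "v \<in> {x + y |x y. x \<in> Kp \<and> y \<in> Km}" by blast
  qed (use subspace_add[OF V] in \<open>auto simp: K_def Kp_def Km_def matrix_vector_mul_assoc[symmetric]
      matrix_vector_right_distrib matrix_vector_mult_diff_distrib matrix_vector_mult_uminus\<close>)
  ultimately show ?thesis using dim_direct_sum[OF Kp Km] unfolding K_def Kp_def Km_def by simp
qed

lemma has_finite_order_odd_dim_pm_eigenspace:
  fixes M :: "real^'n^'n"
  assumes V: "subspace V" and M_V: "\<And>v. v \<in> V \<Longrightarrow> M *v v \<in> V"
    and M: "has_finite_order M" and odd: "odd (dim V)"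
  shows "odd (dim {v \<in> V. M *v v = v}) \<or> odd (dim {v \<in> V. M *v v = - v})"
proof -
  obtain j where j: "j > 0" "matpow M j = mat 1" using M by (auto simp: has_finite_order_def)
  define Y where "Y = M ** M"
  have "Y = matpow M 2" by (simp add: Y_def numeral_2_eq_2)
  then have "matpow Y j = matpow (matpow M j) 2" by (simp only: matpow_mult[symmetric] mult.commute)
  then have Y_j: "matpow Y j = mat 1" using j(2) by (simp add: matpow_mat_1)
  have Y_V: "Y *v v \<in> V" if "v \<in> V" for v
    using M_V that by (simp add: Y_def matrix_vector_mul_assoc[symmetric])
  define R where "R = {v \<in> V. cyclic_average Y j v = 0}"
  have R: "subspace R"
    unfolding R_def using subspace_inter[OF V linear_subspace_kernel[OF linear_cyclic_average]]
    by (simp add: Int_def)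
  have M_R: "M *v r \<in> R" if "r \<in> R" for r
    using that M_V cyclic_average_commute[of M Y j r] by (auto simp: R_def Y_def matrix_mul_assoc)
  text \<open>An eigenvector of M in R has eigenvalue \<plusminus>1, so it is fixed by Y, and then the
    average of its orbit is a nonzero multiple of it: R has no real eigenvalue.\<close>
  have "even (dim R)"
  proof (rule ccontr)
    assume "odd (dim R)"
    then obtain r c where r: "r \<in> R" "r \<noteq> 0" "M *v r = c *\<^sub>R r"
      using invariant_subspace_odd_dim_has_eigenvector[OF R M_R] by blast
    then have "c = 1 \<or> c = -1" using has_finite_order_eigenvalue[OF M] by blast
    then have "Y *v r = r"
      using r(3) by (auto simp: Y_def matrix_vector_mul_assoc[symmetric] matrix_vector_mult_scaleR)
    then show False using cyclic_average_fixed[of Y r j] r(1,2) j(1) by (simp add: R_def)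
  qed
  then show ?thesis
    using odd dim_fixed_space_plus_average_kernel[OF V Y_V Y_j j(1)] dim_square_fixed_space[OF V M_V]
    unfolding R_def Y_def by presburger
qed

lemma matrix_vector_mult_span:
  fixes M :: "real^'n^'n"
  assumes "\<And>u. u \<in> X \<Longrightarrow> M *v u \<in> span X" and "b \<in> span X"
  shows "M *v b \<in> span X"
proof -
  have "(*v) M ` X \<subseteq> span X" using assms(1) by blast
  then have "span ((*v) M ` X) \<subseteq> span X" by (rule span_minimal[OF _ subspace_span])
  moreover have "M *v b \<in> span ((*v) M ` X)"
    using assms(2) by (simp add: span_linear_image[OF matrix_vector_mul_linear])
  ultimately show ?thesis by blast
qed

lemma commuting_finite_order_common_pm_eigenvector:
  fixes S :: "(real^'n^'n) set"
  assumes "finite S" and "subspace V" and "odd (dim V)"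
    and "\<And>M v. M \<in> S \<Longrightarrow> v \<in> V \<Longrightarrow> M *v v \<in> V"
    and "\<And>M. M \<in> S \<Longrightarrow> has_finite_order M"
    and "\<And>M M' v. M \<in> S \<Longrightarrow> M' \<in> S \<Longrightarrow> v \<in> V \<Longrightarrow> M *v (M' *v v) = M' *v (M *v v)"
  shows "\<exists>v\<in>V. v \<noteq> 0 \<and> (\<forall>M\<in>S. M *v v = v \<or> M *v v = - v)"
  using assms
proof (induction S arbitrary: V rule: finite_induct)
  case empty
  then have "\<not> V \<subseteq> {0}" by (metis dim_eq_0 odd_pos less_irrefl)
  then show ?case by blast
next
  case (insert M S)
  have M_V: "\<And>v. v \<in> V \<Longrightarrow> M *v v \<in> V" using insert.prems(3)[OF insertI1] .
  have "odd (dim {v \<in> V. M *v v = 1 *\<^sub>R v}) \<or> odd (dim {v \<in> V. M *v v = (-1) *\<^sub>R v})"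
    using has_finite_order_odd_dim_pm_eigenspace[OF insert.prems(1) M_V
        insert.prems(4)[OF insertI1] insert.prems(2)]
    by simp
  then obtain c :: real where c: "c = 1 \<or> c = -1" and odd: "odd (dim {v \<in> V. M *v v = c *\<^sub>R v})"
    by blast
  define W where "W = {v \<in> V. M *v v = c *\<^sub>R v}"
  have W: "subspace W" unfolding W_def using subspace_eigenspace[OF insert.prems(1)] .
  have "M' *v v \<in> W" if "M' \<in> S" "v \<in> W" for M' v
  proof -
    have "M *v (M' *v v) = M' *v (M *v v)" using that insert.prems(5) by (auto simp: W_def)
    then show ?thesis using that insert.prems(3) by (auto simp: W_def matrix_vector_mult_scaleR)
  qed
  then obtain v where v: "v \<in> W" "v \<noteq> 0" "\<forall>M'\<in>S. M' *v v = v \<or> M' *v v = - v"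
    using insert.IH[OF W odd[folded W_def]] insert.prems(4,5) by (auto simp: W_def)
  then have "M *v v = v \<or> M *v v = - v" using c by (auto simp: W_def)
  then show ?case using v by (auto simp: W_def)
qed

section \<open>Matrix representations and normalizing matrices\<close>

locale matrix_rep = group G for G :: "('a, 'b) monoid_scheme" (structure) +
  fixes \<sigma> :: "'a \<Rightarrow> real^'n^'n"
  assumes rep_mult: "x \<in> carrier G \<Longrightarrow> y \<in> carrier G \<Longrightarrow> \<sigma> (x \<otimes> y) = \<sigma> x ** \<sigma> y"
    and rep_one: "\<sigma> \<one> = mat 1"

text \<open>For finite S and h of finite order this says that h normalizes \<sigma>(S).\<close>
definition normalized_by :: "('a \<Rightarrow> real^'n^'n) \<Rightarrow> 'a set \<Rightarrow> real^'n^'n \<Rightarrow> bool" where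
  "normalized_by \<sigma> S h \<longleftrightarrow> (\<forall>x\<in>S. \<exists>y\<in>S. \<sigma> x ** h = h ** \<sigma> y)"

context matrix_rep
begin

definition subspace_stabilizer :: "(real^'n) set \<Rightarrow> 'a set" where
  "subspace_stabilizer W = {x \<in> carrier G. \<forall>w\<in>W. \<sigma> x *v w \<in> W}"

lemma rep_inv_left: "x \<in> carrier G \<Longrightarrow> \<sigma> (inv x) ** \<sigma> x = mat 1"
  by (metis inv_closed l_inv rep_mult rep_one)

lemma rep_inv_right: "x \<in> carrier G \<Longrightarrow> \<sigma> x ** \<sigma> (inv x) = mat 1"
  by (metis inv_closed r_inv rep_mult rep_one)

lemma rep_pow: "x \<in> carrier G \<Longrightarrow> \<sigma> (x [^] (n::nat)) = matpow (\<sigma> x) n"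
  by (induct n) (simp_all add: rep_one rep_mult matpow_Suc_right del: matpow.simps(2))

lemma rep_has_finite_order:
  assumes "finite (carrier G)" and "x \<in> carrier G"
  shows "has_finite_order (\<sigma> x)"
  unfolding has_finite_order_def
  using rep_pow[OF assms(2), of "order G"] pow_order_eq_1[OF assms(2)] rep_one order_gt_0_iff_finite assms(1)
  by auto

lemma matrix_rep_subgroup:
  assumes "subgroup H G"
  shows "matrix_rep (G\<lparr>carrier := H\<rparr>) \<sigma>"
proof (intro matrix_rep.intro matrix_rep_axioms.intro)
  show "group (G\<lparr>carrier := H\<rparr>)" by (rule subgroup.subgroup_is_group[OF assms is_group])
qed (use subgroup.mem_carrier[OF assms] in \<open>auto simp: rep_mult rep_one\<close>)

lemma rep_inv_cancel:
  assumes "x \<in> carrier G"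
  shows "\<sigma> (inv x) *v (\<sigma> x *v u) = u" and "\<sigma> x *v (\<sigma> (inv x) *v u) = u"
  using rep_inv_left[OF assms] rep_inv_right[OF assms] by (simp_all add: matrix_vector_mul_assoc)

lemma rep_mult_shift:
  assumes "a \<in> carrier G" "b \<in> carrier G" "a' \<in> carrier G" "b' \<in> carrier G"
    and "\<sigma> a ** h = h ** \<sigma> a'" "\<sigma> b ** h = h ** \<sigma> b'"
  shows "\<sigma> (a \<otimes> b) ** h = h ** \<sigma> (a' \<otimes> b')"
proof -
  have "\<sigma> (a \<otimes> b) ** h = \<sigma> a ** (\<sigma> b ** h)"
    using assms(1,2) by (simp add: rep_mult matrix_mul_assoc)
  also have "\<dots> = (\<sigma> a ** h) ** \<sigma> b'" using assms(6) by (simp add: matrix_mul_assoc)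
  also have "\<dots> = h ** \<sigma> (a' \<otimes> b')" using assms(3-5) by (simp add: rep_mult matrix_mul_assoc)
  finally show ?thesis .
qed

lemma rep_inv_shift:
  assumes "a \<in> carrier G" "a' \<in> carrier G" and "\<sigma> a ** h = h ** \<sigma> a'"
  shows "\<sigma> (inv a) ** h = h ** \<sigma> (inv a')"
proof -
  have "\<sigma> (inv a) ** h = \<sigma> (inv a) ** h ** (\<sigma> a' ** \<sigma> (inv a'))"
    by (simp only: rep_inv_right[OF assms(2)] matrix_mul_rid)
  also have "\<dots> = \<sigma> (inv a) ** (h ** \<sigma> a') ** \<sigma> (inv a')"
    by (simp only: matrix_mul_assoc)
  also have "\<dots> = \<sigma> (inv a) ** (\<sigma> a ** h) ** \<sigma> (inv a')"
    by (simp only: assms(3))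
  also have "\<dots> = (\<sigma> (inv a) ** \<sigma> a) ** h ** \<sigma> (inv a')"
    by (simp only: matrix_mul_assoc)
  also have "\<dots> = h ** \<sigma> (inv a')"
    by (simp only: rep_inv_left[OF assms(1)] matrix_mul_lid)
  finally show ?thesis .
qed

lemma normalized_by_generate:
  assumes S: "S \<subseteq> carrier G" and norm: "normalized_by \<sigma> S h"
  shows "normalized_by \<sigma> (generate G S) h"
  unfolding normalized_by_def
proof
  have gen_carrier: "generate G S \<subseteq> carrier G" using generate_in_carrier[OF S] by blast
  fix x assume "x \<in> generate G S"
  then show "\<exists>y\<in>generate G S. \<sigma> x ** h = h ** \<sigma> y"
  proof (induction rule: generate.induct)
    case one
    show ?case by (intro bexI[of _ \<one>] generate.one) (simp add: rep_one)
  next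
    case (incl g)
    then obtain y where y: "y \<in> S" "\<sigma> g ** h = h ** \<sigma> y"
      using norm by (auto simp: normalized_by_def)
    show ?case using generate.incl[OF y(1)] y(2) by blast
  next
    case (inv g)
    then obtain y where y: "y \<in> S" "\<sigma> g ** h = h ** \<sigma> y"
      using norm by (auto simp: normalized_by_def)
    have "\<sigma> (inv g) ** h = h ** \<sigma> (inv y)" by (rule rep_inv_shift) (use inv y S in auto)
    then show ?case using generate.inv[OF y(1)] by blast
  next
    case (eng g1 g2)
    then obtain y1 y2 where y: "y1 \<in> generate G S" "\<sigma> g1 ** h = h ** \<sigma> y1"
      "y2 \<in> generate G S" "\<sigma> g2 ** h = h ** \<sigma> y2" by blast
    have "\<sigma> (g1 \<otimes> g2) ** h = h ** \<sigma> (y1 \<otimes> y2)"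
      by (rule rep_mult_shift[OF _ _ _ _ y(2,4)]) (use y(1,3) eng(1,2) gen_carrier in auto)
    then show ?case using generate.eng[OF y(1,3)] by blast
  qed
qed

lemma normalized_by_derived:
  assumes H: "H \<subseteq> carrier G" and norm: "normalized_by \<sigma> H h"
  shows "normalized_by \<sigma> (derived G H) h"
proof -
  have "\<exists>y\<in>derived_set G H. \<sigma> x ** h = h ** \<sigma> y" if "x \<in> derived_set G H" for x
  proof -
    from that obtain h1 h2 where h12: "h1 \<in> H" "h2 \<in> H" "x = h1 \<otimes> h2 \<otimes> inv h1 \<otimes> inv h2"
      by auto
    obtain y1 y2 where y: "y1 \<in> H" "\<sigma> h1 ** h = h ** \<sigma> y1" "y2 \<in> H" "\<sigma> h2 ** h = h ** \<sigma> y2"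
      using norm h12 unfolding normalized_by_def by meson
    have c: "h1 \<in> carrier G" "h2 \<in> carrier G" "y1 \<in> carrier G" "y2 \<in> carrier G"
      using h12 y H by auto
    have "\<sigma> x ** h = h ** \<sigma> (y1 \<otimes> y2 \<otimes> inv y1 \<otimes> inv y2)"
      unfolding h12(3) using c y(2,4)
      by (intro rep_mult_shift rep_inv_shift) (auto intro: rep_mult_shift rep_inv_shift)
    moreover have "y1 \<otimes> y2 \<otimes> inv y1 \<otimes> inv y2 \<in> derived_set G H" using y(1,3) by blast
    ultimately show ?thesis by blast
  qed
  then show ?thesis
    unfolding derived_def
    by (intro normalized_by_generate derived_set_in_carrier[OF H]) (simp add: normalized_by_def)
qed

lemma normalized_by_derived_seq:
  assumes "normalized_by \<sigma> (carrier G) h"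
  shows "normalized_by \<sigma> ((derived G ^^ k) (carrier G)) h"
  by (induct k) (simp_all add: assms normalized_by_derived exp_of_derived_in_carrier)

lemma normalized_by_matpow:
  assumes norm: "normalized_by \<sigma> (carrier G) h" and x: "x \<in> carrier G"
  shows "\<exists>y\<in>carrier G. \<sigma> x ** matpow h n = matpow h n ** \<sigma> y"
  using x
proof (induction n arbitrary: x)
  case 0
  then show ?case by auto
next
  case (Suc n)
  obtain x' where x': "x' \<in> carrier G" "\<sigma> x ** h = h ** \<sigma> x'"
    using norm Suc.prems unfolding normalized_by_def by blast
  obtain y where y: "y \<in> carrier G" "\<sigma> x' ** matpow h n = matpow h n ** \<sigma> y"
    using Suc.IH[OF x'(1)] by blast
  have "\<sigma> x ** matpow h (Suc n) = h ** (\<sigma> x' ** matpow h n)"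
    using x'(2) by (simp add: matrix_mul_assoc)
  also have "\<dots> = matpow h (Suc n) ** \<sigma> y" using y(2) by (simp add: matrix_mul_assoc)
  finally show ?case using y(1) by blast
qed

lemma twisted_has_finite_order:
  assumes fin: "finite (carrier G)" and h: "has_finite_order h"
    and norm: "normalized_by \<sigma> (carrier G) h" and c: "c \<in> carrier G"
  shows "has_finite_order (\<sigma> c ** h)"
proof -
  have pow: "\<exists>c'\<in>carrier G. matpow (\<sigma> c ** h) n = matpow h n ** \<sigma> c'" for n
  proof (induction n)
    case 0
    show ?case by (intro bexI[of _ \<one>]) (simp_all add: rep_one)
  next
    case (Suc n)
    then obtain c' where c': "c' \<in> carrier G" "matpow (\<sigma> c ** h) n = matpow h n ** \<sigma> c'"
      by blast
    obtain c'' where c'': "c'' \<in> carrier G" "\<sigma> c ** matpow h (Suc n) = matpow h (Suc n) ** \<sigma> c''"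
      using normalized_by_matpow[OF norm c] by blast
    have "matpow (\<sigma> c ** h) (Suc n) = (\<sigma> c ** matpow h (Suc n)) ** \<sigma> c'"
      using c'(2) by (simp add: matrix_mul_assoc)
    also have "\<dots> = matpow h (Suc n) ** \<sigma> (c'' \<otimes> c')"
      unfolding c''(2) using c'(1) c''(1) by (simp add: rep_mult matrix_mul_assoc del: matpow.simps)
    finally show ?case using c' c'' by blast
  qed
  obtain j where j: "j > 0" "matpow h j = mat 1" using h by (auto simp: has_finite_order_def)
  obtain c' where c': "c' \<in> carrier G" "matpow (\<sigma> c ** h) j = \<sigma> c'" using pow[of j] j(2) by auto
  have "matpow (\<sigma> c') (order G) = mat 1"
    using rep_pow[OF c'(1), of "order G"] pow_order_eq_1[OF c'(1)] rep_one by simp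
  show ?thesis
    unfolding has_finite_order_def
  proof (intro exI conjI)
    show "j * order G > 0" using j(1) fin by (simp add: order_gt_0_iff_finite)
    show "matpow (\<sigma> c ** h) (j * order G) = mat 1"
      using \<open>matpow (\<sigma> c') (order G) = mat 1\<close> by (simp add: matpow_mult c'(2))
  qed
qed

lemma normalized_by_twist:
  assumes norm: "normalized_by \<sigma> (carrier G) h" and c: "c \<in> carrier G"
  shows "normalized_by \<sigma> (carrier G) (\<sigma> c ** h)"
  unfolding normalized_by_def
proof
  fix k assume k: "k \<in> carrier G"
  define k' where "k' = inv c \<otimes> k \<otimes> c"
  have k': "k' \<in> carrier G" using c k by (simp add: k'_def)
  then obtain y where y: "y \<in> carrier G" "\<sigma> k' ** h = h ** \<sigma> y"
    using norm by (auto simp: normalized_by_def)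
  have "c \<otimes> k' = k \<otimes> c" using c k by (simp add: k'_def m_assoc[symmetric])
  then have ck': "\<sigma> c ** \<sigma> k' = \<sigma> k ** \<sigma> c" using c k k' by (simp add: rep_mult[symmetric])
  have "\<sigma> k ** (\<sigma> c ** h) = \<sigma> c ** (\<sigma> k' ** h)"
    using ck' by (simp add: matrix_mul_assoc)
  also have "\<dots> = (\<sigma> c ** h) ** \<sigma> y" using y(2) by (simp add: matrix_mul_assoc)
  finally show "\<exists>y\<in>carrier G. \<sigma> k ** (\<sigma> c ** h) = (\<sigma> c ** h) ** \<sigma> y" using y(1) by blast
qed

lemma subgroup_subspace_stabilizer:
  assumes "finite (carrier G)"
  shows "subgroup (subspace_stabilizer W) G"
proof (rule subgroupI)
  show "subspace_stabilizer W \<subseteq> carrier G" by (auto simp: subspace_stabilizer_def)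
  show "subspace_stabilizer W \<noteq> {}" by (auto simp: subspace_stabilizer_def rep_one intro!: exI[of _ \<one>])
next
  fix b assume b: "b \<in> subspace_stabilizer W"
  then have b_G: "b \<in> carrier G" by (simp add: subspace_stabilizer_def)
  obtain i where i: "\<sigma> b ** matpow (\<sigma> b) i = mat 1"
    using has_finite_order_inverse[OF rep_has_finite_order[OF assms b_G]] by blast
  have "\<sigma> (inv b) = \<sigma> (inv b) ** \<sigma> b ** matpow (\<sigma> b) i"
    using i by (simp add: matrix_mul_assoc[symmetric])
  then have "\<sigma> (inv b) = matpow (\<sigma> b) i" using rep_inv_left[OF b_G] by simp
  then show "inv b \<in> subspace_stabilizer W"
    using b matpow_invariant[of W "\<sigma> b"] by (simp add: subspace_stabilizer_def)
next
  fix b c assume "b \<in> subspace_stabilizer W" "c \<in> subspace_stabilizer W"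
  then show "b \<otimes> c \<in> subspace_stabilizer W"
    by (simp add: subspace_stabilizer_def rep_mult matrix_vector_mul_assoc[symmetric])
qed

lemma normalized_by_subspace_stabilizer:
  assumes norm: "normalized_by \<sigma> (carrier G) g" and g: "has_finite_order g"
    and g_W: "\<And>w. w \<in> W \<Longrightarrow> g *v w \<in> W"
  shows "normalized_by \<sigma> (subspace_stabilizer W) g"
  unfolding normalized_by_def
proof
  fix b assume b: "b \<in> subspace_stabilizer W"
  then obtain y where y: "y \<in> carrier G" "\<sigma> b ** g = g ** \<sigma> y"
    using norm unfolding normalized_by_def subspace_stabilizer_def by blast
  obtain i where i: "matpow g i ** g = mat 1" using has_finite_order_inverse[OF g] by blast
  have "\<sigma> y *v w \<in> W" if w: "w \<in> W" for w
  proof -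
    have "\<sigma> y *v w = matpow g i *v (\<sigma> b *v (g *v w))"
      using i y(2) by (simp add: matrix_vector_mul_assoc matrix_mul_assoc)
    then show ?thesis
      using b g_W w matpow_invariant[of W g] by (simp add: subspace_stabilizer_def)
  qed
  then show "\<exists>y\<in>subspace_stabilizer W. \<sigma> b ** g = g ** \<sigma> y"
    using y by (auto simp: subspace_stabilizer_def)
qed

lemma commute_if_derived_acts_trivially:
  assumes H: "H \<subseteq> carrier G" and H_V: "\<And>x v. x \<in> H \<Longrightarrow> v \<in> V \<Longrightarrow> \<sigma> x *v v \<in> V"
    and trivial: "\<And>c v. c \<in> derived G H \<Longrightarrow> v \<in> V \<Longrightarrow> \<sigma> c *v v = v"
    and x: "x \<in> H" and y: "y \<in> H" and v: "v \<in> V"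
  shows "\<sigma> x *v (\<sigma> y *v v) = \<sigma> y *v (\<sigma> x *v v)"
proof -
  have xy: "x \<in> carrier G" "y \<in> carrier G" using x y H by auto
  define c where "c = x \<otimes> y \<otimes> inv x \<otimes> inv y"
  have "c \<in> derived G H" unfolding c_def derived_def using x y by (blast intro: generate.incl)
  then have "\<sigma> c *v (\<sigma> y *v (\<sigma> x *v v)) = \<sigma> y *v (\<sigma> x *v v)"
    using trivial H_V x y v by blast
  moreover have "\<sigma> c *v (\<sigma> y *v (\<sigma> x *v v)) = \<sigma> x *v (\<sigma> y *v v)"
    using xy by (simp add: c_def rep_mult matrix_vector_mul_assoc[symmetric] rep_inv_cancel)
  ultimately show ?thesis by simp
qed

end

section \<open>Weight spaces of a normal subgroup\<close>

locale irrep_on = matrix_rep G \<sigma>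
  for G :: "('a, 'b) monoid_scheme" (structure) and \<sigma> :: "'a \<Rightarrow> real^'n^'n" +
  fixes V :: "(real^'n) set"
  assumes finite_carrier: "finite (carrier G)"
    and subspace_V: "subspace V"
    and rep_V: "x \<in> carrier G \<Longrightarrow> v \<in> V \<Longrightarrow> \<sigma> x *v v \<in> V"
    and irreducible: "subspace U \<Longrightarrow> U \<subseteq> V \<Longrightarrow> (\<And>x u. x \<in> carrier G \<Longrightarrow> u \<in> U \<Longrightarrow> \<sigma> x *v u \<in> U)
      \<Longrightarrow> U = {0} \<or> U = V"
begin

lemma span_rep_orbit:
  assumes "U \<subseteq> V" and "\<not> U \<subseteq> {0}"
  shows "span {\<sigma> x *v u |x u. x \<in> carrier G \<and> u \<in> U} = V"
proof -
  define Z where "Z = span {\<sigma> x *v u |x u. x \<in> carrier G \<and> u \<in> U}"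
  have "Z \<subseteq> V" unfolding Z_def using assms(1) rep_V by (intro span_minimal subspace_V) blast
  moreover have "\<sigma> x *v z \<in> Z" if x: "x \<in> carrier G" and z: "z \<in> Z" for x z
  proof -
    have "\<sigma> x *v y \<in> Z" if "y \<in> {\<sigma> x *v u |x u. x \<in> carrier G \<and> u \<in> U}" for y
    proof -
      from that obtain x' u where y: "x' \<in> carrier G" "u \<in> U" "y = \<sigma> x' *v u" by blast
      then have "\<sigma> x *v y = \<sigma> (x \<otimes> x') *v u" using x by (simp add: rep_mult matrix_vector_mul_assoc)
      then show ?thesis unfolding Z_def using x y by (blast intro: span_base)
    qed
    then show ?thesis using z matrix_vector_mult_span unfolding Z_def by blast
  qed
  moreover have "U \<subseteq> Z" unfolding Z_def
    by (force intro: span_base exI[of _ \<one>] simp: rep_one)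
  ultimately show ?thesis using irreducible[of Z] assms(2) subspace_span unfolding Z_def by blast
qed

end

locale sign_weights = irrep_on G \<sigma> V
  for G :: "('a, 'b) monoid_scheme" (structure) and \<sigma> :: "'a \<Rightarrow> real^'n^'n" and V +
  fixes N :: "'a set"
  assumes normal_N: "N \<lhd> G"
begin

definition weight_space :: "('a \<Rightarrow> real) \<Rightarrow> (real^'n) set" where
  "weight_space l = {v \<in> V. \<forall>x\<in>N. \<sigma> x *v v = l x *\<^sub>R v}"

definition conj_char :: "'a \<Rightarrow> ('a \<Rightarrow> real) \<Rightarrow> ('a \<Rightarrow> real)" where
  "conj_char a l = (\<lambda>x\<in>N. l (inv a \<otimes> x \<otimes> a))"

definition char_orbit :: "('a \<Rightarrow> real) \<Rightarrow> ('a \<Rightarrow> real) set" where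
  "char_orbit l = (\<lambda>a. conj_char a l) ` carrier G"

lemma N_carrier: "x \<in> N \<Longrightarrow> x \<in> carrier G"
  by (rule subgroup.mem_carrier[OF normal_imp_subgroup[OF normal_N]])

lemma conj_in_N: "a \<in> carrier G \<Longrightarrow> x \<in> N \<Longrightarrow> inv a \<otimes> x \<otimes> a \<in> N"
  by (rule normal.inv_op_closed1[OF normal_N])

lemma subspace_weight_space: "subspace (weight_space l)"
  unfolding weight_space_def subspace_def
  using subspace_0[OF subspace_V] subspace_add[OF subspace_V] subspace_scale[OF subspace_V]
  by (auto simp: matrix_vector_right_distrib matrix_vector_mult_scaleR scaleR_add_right)

lemma weight_space_subset: "weight_space l \<subseteq> V"
  by (auto simp: weight_space_def)

lemma conj_char_extensional: "conj_char a l \<in> extensional N"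
  by (simp add: conj_char_def)

lemma conj_char_sign: "a \<in> carrier G \<Longrightarrow> l \<in> N \<rightarrow>\<^sub>E {1, -1} \<Longrightarrow> conj_char a l \<in> N \<rightarrow>\<^sub>E {1, -1}"
  using conj_in_N by (auto simp: conj_char_def PiE_iff)

lemma conj_char_mult:
  assumes "a \<in> carrier G" "b \<in> carrier G"
  shows "conj_char b (conj_char a l) = conj_char (b \<otimes> a) l"
proof
  fix x
  show "conj_char b (conj_char a l) x = conj_char (b \<otimes> a) l x"
  proof (cases "x \<in> N")
    case True
    have "inv a \<otimes> (inv b \<otimes> x \<otimes> b) \<otimes> a = inv (b \<otimes> a) \<otimes> x \<otimes> (b \<otimes> a)"
      using assms N_carrier[OF True] by (simp add: inv_mult_group m_assoc)
    then show ?thesis using True conj_in_N[OF assms(2) True] by (simp add: conj_char_def)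
  qed (simp add: conj_char_def)
qed

lemma conj_char_one: "l \<in> extensional N \<Longrightarrow> conj_char \<one> l = l"
  by (auto simp: conj_char_def N_carrier extensional_def)

lemma rep_weight_space:
  assumes a: "a \<in> carrier G" and w: "w \<in> weight_space l"
  shows "\<sigma> a *v w \<in> weight_space (conj_char a l)"
proof -
  have "\<sigma> x *v (\<sigma> a *v w) = conj_char a l x *\<^sub>R (\<sigma> a *v w)" if x: "x \<in> N" for x
  proof -
    have x_G: "x \<in> carrier G" using N_carrier[OF x] .
    have "a \<otimes> (inv a \<otimes> x \<otimes> a) = x \<otimes> a" using a x_G by (simp add: m_assoc[symmetric])
    then have "\<sigma> x ** \<sigma> a = \<sigma> a ** \<sigma> (inv a \<otimes> x \<otimes> a)"
      using a x_G by (simp add: rep_mult[symmetric])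
    then have "\<sigma> x *v (\<sigma> a *v w) = \<sigma> a *v (\<sigma> (inv a \<otimes> x \<otimes> a) *v w)"
      by (simp add: matrix_vector_mul_assoc)
    also have "\<dots> = l (inv a \<otimes> x \<otimes> a) *\<^sub>R (\<sigma> a *v w)"
      using w conj_in_N[OF a x] by (simp add: weight_space_def matrix_vector_mult_scaleR)
    finally show ?thesis using x by (simp add: conj_char_def)
  qed
  then show ?thesis using rep_V a w by (simp add: weight_space_def)
qed

lemma char_orbit_extensional: "char_orbit l \<subseteq> extensional N"
  by (auto simp: char_orbit_def conj_char_extensional)

lemma char_orbit_self: "l \<in> extensional N \<Longrightarrow> l \<in> char_orbit l"
  unfolding char_orbit_def using conj_char_one by force

lemma finite_char_orbit: "finite (char_orbit l)"
  by (simp add: char_orbit_def finite_carrier)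

lemma weight_space_inter_span:
  assumes "finite S" "S \<subseteq> extensional N" "l \<in> extensional N" "l \<notin> S"
  shows "weight_space l \<inter> span (\<Union> (weight_space ` S)) \<subseteq> {0}"
  using assms
proof (induction S rule: finite_induct)
  case empty
  then show ?case by simp
next
  case (insert mu S)
  show ?case
  proof
    fix w assume w: "w \<in> weight_space l \<inter> span (\<Union> (weight_space ` insert mu S))"
    have span_mu: "span (weight_space mu) = weight_space mu"
      by (rule span_eq_iff[THEN iffD2, OF subspace_weight_space])
    obtain a b where ab: "a \<in> weight_space mu" "b \<in> span (\<Union> (weight_space ` S))" "w = a + b"
      using w span_Un[of "weight_space mu" "\<Union> (weight_space ` S)"] span_mu by auto
    have "l \<noteq> mu" using insert.prems by blast
    then obtain x where x: "x \<in> N" "l x \<noteq> mu x"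
      using insert.prems extensionalityI[of l N mu] by blast
    have "\<sigma> x *v u \<in> span (\<Union> (weight_space ` S))" if "u \<in> \<Union> (weight_space ` S)" for u
    proof -
      from that obtain nu where "nu \<in> S" "u \<in> weight_space nu" by blast
      then have "\<sigma> x *v u = nu x *\<^sub>R u" using x(1) by (simp add: weight_space_def)
      then show ?thesis using that by (simp add: span_base span_scale)
    qed
    then have x_b: "\<sigma> x *v b \<in> span (\<Union> (weight_space ` S))"
      using matrix_vector_mult_span ab(2) by blast
    have "\<sigma> x *v w = l x *\<^sub>R w" "\<sigma> x *v a = mu x *\<^sub>R a"
      using w ab(1) x(1) by (auto simp: weight_space_def)
    then have eq: "(l x - mu x) *\<^sub>R a = \<sigma> x *v b - l x *\<^sub>R b"
      using ab(3) by (simp add: matrix_vector_right_distrib algebra_simps)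
    have "a = (1 / (l x - mu x)) *\<^sub>R ((l x - mu x) *\<^sub>R a)" using x(2) by simp
    then have "a = (1 / (l x - mu x)) *\<^sub>R (\<sigma> x *v b - l x *\<^sub>R b)" by (simp only: eq)
    then have "w \<in> span (\<Union> (weight_space ` S))"
      using x_b ab by (simp add: span_diff span_scale span_add)
    then show "w \<in> {0}" using w insert.IH insert.prems by blast
  qed
qed

lemma dim_span_weight_spaces:
  assumes "finite S" "S \<subseteq> extensional N"
  shows "dim (span (\<Union> (weight_space ` S))) = (\<Sum>mu\<in>S. dim (weight_space mu))"
  using assms
proof (induction S rule: finite_induct)
  case empty
  then show ?case by simp
next
  case (insert mu S)
  have span_mu: "span (weight_space mu) = weight_space mu"
    by (rule span_eq_iff[THEN iffD2, OF subspace_weight_space])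
  have "span (\<Union> (weight_space ` insert mu S))
      = {x + y |x y. x \<in> weight_space mu \<and> y \<in> span (\<Union> (weight_space ` S))}"
    using span_Un[of "weight_space mu" "\<Union> (weight_space ` S)"] span_mu by simp
  moreover have "weight_space mu \<inter> span (\<Union> (weight_space ` S)) \<subseteq> {0}"
    using weight_space_inter_span insert by blast
  ultimately have "dim (span (\<Union> (weight_space ` insert mu S)))
      = dim (weight_space mu) + dim (span (\<Union> (weight_space ` S)))"
    using dim_direct_sum[OF subspace_weight_space subspace_span] by simp
  then show ?case using insert by simp
qed

lemma span_char_orbit:
  assumes l: "l \<in> extensional N" and nonzero: "\<not> weight_space l \<subseteq> {0}"
  shows "span (\<Union> (weight_space ` char_orbit l)) = V"
proof -
  define U where "U = span (\<Union> (weight_space ` char_orbit l))"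
  have "U \<subseteq> V" unfolding U_def using weight_space_subset subspace_V by (intro span_minimal) auto
  moreover have "\<sigma> a *v u \<in> U" if a: "a \<in> carrier G" and u: "u \<in> U" for a u
  proof -
    have "\<sigma> a *v w \<in> U" if "w \<in> \<Union> (weight_space ` char_orbit l)" for w
    proof -
      from that obtain b where b: "b \<in> carrier G" "w \<in> weight_space (conj_char b l)"
        by (auto simp: char_orbit_def)
      have "\<sigma> a *v w \<in> weight_space (conj_char (a \<otimes> b) l)"
        using rep_weight_space[OF a b(2)] conj_char_mult[OF b(1) a] by simp
      then show ?thesis using a b(1) unfolding U_def char_orbit_def by (blast intro: span_base)
    qed
    then show ?thesis using u matrix_vector_mult_span unfolding U_def by blast
  qed
  moreover have "weight_space l \<subseteq> U" unfolding U_def using char_orbit_self[OF l] by (blast intro: span_base)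
  ultimately show ?thesis
    using irreducible[of U] nonzero subspace_span unfolding U_def by blast
qed

lemma char_in_orbit:
  assumes "mu \<in> extensional N" "\<not> weight_space mu \<subseteq> {0}"
    and "span (\<Union> (weight_space ` char_orbit l)) = V"
  shows "mu \<in> char_orbit l"
proof (rule ccontr)
  assume "mu \<notin> char_orbit l"
  then have "weight_space mu \<inter> span (\<Union> (weight_space ` char_orbit l)) \<subseteq> {0}"
    by (rule weight_space_inter_span[OF finite_char_orbit char_orbit_extensional assms(1)])
  then have "weight_space mu \<subseteq> {0}" using weight_space_subset[of mu] unfolding assms(3) by auto
  with assms(2) show False ..
qed

lemma exists_sign_char:
  assumes odd: "odd (dim V)"
    and commute: "\<And>x y v. x \<in> N \<Longrightarrow> y \<in> N \<Longrightarrow> v \<in> V \<Longrightarrow> \<sigma> x *v (\<sigma> y *v v) = \<sigma> y *v (\<sigma> x *v v)"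
  shows "\<exists>l \<in> N \<rightarrow>\<^sub>E {1, -1}. \<not> weight_space l \<subseteq> {0}"
proof -
  have "finite N" using finite_subset[OF _ finite_carrier] N_carrier by blast
  then obtain v where v: "v \<in> V" "v \<noteq> 0" "\<forall>M\<in>\<sigma> ` N. M *v v = v \<or> M *v v = - v"
    using commuting_finite_order_common_pm_eigenvector[OF _ subspace_V odd, of "\<sigma> ` N"]
      rep_V N_carrier rep_has_finite_order[OF finite_carrier] commute
    by (smt (verit, best) finite_imageI image_iff)
  define l where "l = (\<lambda>x\<in>N. if \<sigma> x *v v = v then 1 else -1 :: real)"
  have "l \<in> N \<rightarrow>\<^sub>E {1, -1}" by (simp add: l_def)
  moreover have "v \<in> weight_space l" using v by (auto simp: weight_space_def l_def)
  ultimately show ?thesis using v(2) by blast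
qed

lemma odd_weight_space:
  assumes odd: "odd (dim V)"
    and commute: "\<And>x y v. x \<in> N \<Longrightarrow> y \<in> N \<Longrightarrow> v \<in> V \<Longrightarrow> \<sigma> x *v (\<sigma> y *v v) = \<sigma> y *v (\<sigma> x *v v)"
  obtains l where "l \<in> N \<rightarrow>\<^sub>E {1, -1}" "odd (dim (weight_space l))"
    "span (\<Union> (weight_space ` char_orbit l)) = V"
proof -
  obtain l0 where l0: "l0 \<in> N \<rightarrow>\<^sub>E {1, -1}" "\<not> weight_space l0 \<subseteq> {0}"
    using exists_sign_char[OF odd commute] by blast
  have "l0 \<in> extensional N" using l0(1) by (simp add: PiE_iff)
  then have span_eq: "span (\<Union> (weight_space ` char_orbit l0)) = V"
    using span_char_orbit l0(2) by blast
  have "dim V = (\<Sum>mu\<in>char_orbit l0. dim (weight_space mu))"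
    using dim_span_weight_spaces[OF finite_char_orbit char_orbit_extensional, of l0]
    unfolding span_eq .
  then obtain l where l: "l \<in> char_orbit l0" "odd (dim (weight_space l))"
    using odd by (metis dvd_sum)
  then have l_sign: "l \<in> N \<rightarrow>\<^sub>E {1, -1}" using conj_char_sign l0(1) by (auto simp: char_orbit_def)
  moreover have "\<not> weight_space l \<subseteq> {0}" using l(2) by (metis dim_eq_0 odd_pos less_irrefl)
  moreover have "l \<in> extensional N" using l_sign by (simp add: PiE_iff)
  ultimately show thesis using that l(2) span_char_orbit by blast
qed

lemma sign_char_takes_neg:
  assumes l: "l \<in> N \<rightarrow>\<^sub>E {1, -1}" and span: "span (\<Union> (weight_space ` char_orbit l)) = V"
    and nontrivial: "\<exists>x\<in>N. \<exists>v\<in>V. \<sigma> x *v v \<noteq> v"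
  shows "\<exists>x\<in>N. l x = -1"
proof (rule ccontr)
  assume "\<not> (\<exists>x\<in>N. l x = -1)"
  then have l_1: "l x = 1" if "x \<in> N" for x using l that by (auto simp: PiE_iff)
  have "conj_char a l = l" if "a \<in> carrier G" for a
  proof
    fix x show "conj_char a l x = l x"
      using l l_1 conj_in_N[OF that] by (cases "x \<in> N") (auto simp: conj_char_def PiE_iff extensional_def)
  qed
  then have "char_orbit l = {l}" by (auto simp: char_orbit_def)
  then have "weight_space l = V"
    using span span_eq_iff[THEN iffD2, OF subspace_weight_space] by simp
  then show False using nontrivial l_1 by (auto simp: weight_space_def)
qed

lemma twist_weight_space:
  assumes norm: "normalized_by \<sigma> N h" and h_V: "\<And>v. v \<in> V \<Longrightarrow> h *v v \<in> V"
  shows "\<exists>mu \<in> extensional N. \<forall>w \<in> weight_space l. h *v w \<in> weight_space mu"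
proof -
  define f where "f x = (SOME y. y \<in> N \<and> \<sigma> x ** h = h ** \<sigma> y)" for x
  have f: "f x \<in> N" "\<sigma> x ** h = h ** \<sigma> (f x)" if "x \<in> N" for x
    using someI_ex[of "\<lambda>y. y \<in> N \<and> \<sigma> x ** h = h ** \<sigma> y"] norm that
    unfolding f_def normalized_by_def by blast+
  define mu where "mu = (\<lambda>x\<in>N. l (f x))"
  have "h *v w \<in> weight_space mu" if w: "w \<in> weight_space l" for w
  proof -
    have "\<sigma> x *v (h *v w) = mu x *\<^sub>R (h *v w)" if x: "x \<in> N" for x
    proof -
      have "\<sigma> x *v (h *v w) = h *v (\<sigma> (f x) *v w)"
        by (simp add: matrix_vector_mul_assoc f(2)[OF x])
      also have "\<dots> = mu x *\<^sub>R (h *v w)"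
        using w f(1)[OF x] x by (simp add: weight_space_def mu_def matrix_vector_mult_scaleR)
      finally show ?thesis .
    qed
    then show ?thesis using h_V w weight_space_subset by (auto simp: weight_space_def)
  qed
  moreover have "mu \<in> extensional N" by (simp add: mu_def)
  ultimately show ?thesis by blast
qed

text \<open>Clifford's argument: the G-translates of a nonzero U span V; each lies in U (for elements
  of the stabilizer) or in another weight space of the orbit, and these are independent of
  weight_space l.\<close>
lemma stabilizer_irreducible_on_weight_space:
  assumes l: "l \<in> extensional N" and U: "subspace U" "U \<subseteq> weight_space l"
    and U_inv: "\<And>b u. b \<in> subspace_stabilizer (weight_space l) \<Longrightarrow> u \<in> U \<Longrightarrow> \<sigma> b *v u \<in> U"
  shows "U = {0} \<or> U = weight_space l"
proof (cases "U \<subseteq> {0}")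
  case True
  then show ?thesis using subspace_0[OF U(1)] by blast
next
  case False
  define others where "others = \<Union> (weight_space ` (char_orbit l - {l}))"
  have "{\<sigma> a *v u |a u. a \<in> carrier G \<and> u \<in> U} \<subseteq> span (U \<union> others)"
  proof (intro subsetI, elim CollectE exE conjE)
    fix y a u assume a: "a \<in> carrier G" and u: "u \<in> U" and y: "y = \<sigma> a *v u"
    have y_W: "y \<in> weight_space (conj_char a l)" using rep_weight_space[OF a] u U(2) y by blast
    show "y \<in> span (U \<union> others)"
    proof (cases "conj_char a l = l")
      case True
      have "\<sigma> a *v w \<in> weight_space l" if "w \<in> weight_space l" for w
        using rep_weight_space[OF a that] True by simp
      then have "a \<in> subspace_stabilizer (weight_space l)"
        using a by (simp add: subspace_stabilizer_def)
      then show ?thesis using U_inv u y by (blast intro: span_base)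
    next
      case False
      then have "conj_char a l \<in> char_orbit l - {l}" using a by (auto simp: char_orbit_def)
      then show ?thesis using y_W unfolding others_def by (blast intro: span_base)
    qed
  qed
  then have "span {\<sigma> a *v u |a u. a \<in> carrier G \<and> u \<in> U} \<subseteq> span (U \<union> others)"
    by (rule span_minimal[OF _ subspace_span])
  moreover have "U \<subseteq> V" using U(2) weight_space_subset by (rule subset_trans)
  ultimately have V_span: "V \<subseteq> span (U \<union> others)" using span_rep_orbit False by simp
  have "weight_space l \<subseteq> U"
  proof
    fix w assume w: "w \<in> weight_space l"
    then obtain x y where xy: "x \<in> U" "y \<in> span others" "w = x + y"
      using V_span weight_space_subset span_Un span_eq_iff[THEN iffD2, OF U(1)] by blast
    have "y \<in> weight_space l"
      using subspace_diff[OF subspace_weight_space w] xy U(2) by (metis add_diff_cancel_left' subsetD)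
    moreover have "weight_space l \<inter> span others \<subseteq> {0}" unfolding others_def
      by (rule weight_space_inter_span) (use finite_char_orbit char_orbit_extensional l in auto)
    ultimately show "w \<in> U" using xy by auto
  qed
  then show ?thesis using U(2) by blast
qed

lemma twist_stabilizes_weight_space:
  assumes norm: "normalized_by \<sigma> N h" and h_V: "\<And>v. v \<in> V \<Longrightarrow> h *v v \<in> V"
    and h: "has_finite_order h" and l: "l \<in> extensional N"
    and nonzero: "\<not> weight_space l \<subseteq> {0}"
    and span: "span (\<Union> (weight_space ` char_orbit l)) = V"
  obtains a where "a \<in> carrier G" "\<And>w. w \<in> weight_space l \<Longrightarrow> \<sigma> (inv a) *v (h *v w) \<in> weight_space l"
proof -
  obtain mu where mu: "mu \<in> extensional N" "\<And>w. w \<in> weight_space l \<Longrightarrow> h *v w \<in> weight_space mu"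
    using twist_weight_space[OF norm h_V] by blast
  obtain w where "w \<in> weight_space l" "w \<noteq> 0" using nonzero by blast
  then have "h *v w \<in> weight_space mu" "h *v w \<noteq> 0" using mu(2) has_finite_order_kernel[OF h] by auto
  then have "mu \<in> char_orbit l" using char_in_orbit[OF mu(1) _ span] by blast
  then obtain a where a: "a \<in> carrier G" "mu = conj_char a l" by (auto simp: char_orbit_def)
  have "conj_char (inv a) mu = l" using a conj_char_mult conj_char_one[OF l] by simp
  then have "\<sigma> (inv a) *v (h *v w) \<in> weight_space l" if "w \<in> weight_space l" for w
    using rep_weight_space[OF inv_closed[OF a(1)] mu(2)[OF that]] by simp
  then show thesis using that a(1) by blast
qed

end

section \<open>Induction on the dimension\<close>

locale twisted_odd_irrep = irrep_on G \<sigma> V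
  for G :: "('a, 'b) monoid_scheme" (structure) and \<sigma> :: "'a \<Rightarrow> real^'n^'n" and V +
  fixes h :: "real^'n^'n"
  assumes solvable_G: "solvable G"
    and odd_dim_V: "odd (dim V)"
    and nontrivial: "\<exists>x\<in>carrier G. \<exists>v\<in>V. \<sigma> x *v v \<noteq> v"
    and h_finite_order: "has_finite_order h"
    and h_V: "v \<in> V \<Longrightarrow> h *v v \<in> V"
    and h_normalizes: "normalized_by \<sigma> (carrier G) h"
begin

text \<open>N is the last term of the derived series that acts nontrivially on V; its commutators lie
  in the next term, which acts trivially.\<close>
lemma exists_normal_subgroup_acting_abelian:
  obtains N where "N \<lhd> G" "normalized_by \<sigma> N h"
    "\<And>x y v. x \<in> N \<Longrightarrow> y \<in> N \<Longrightarrow> v \<in> V \<Longrightarrow> \<sigma> x *v (\<sigma> y *v v) = \<sigma> y *v (\<sigma> x *v v)"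
    "\<exists>x\<in>N. \<exists>v\<in>V. \<sigma> x *v v \<noteq> v"
proof -
  define D where "D k = (derived G ^^ k) (carrier G)" for k
  define acts_trivially where "acts_trivially k \<longleftrightarrow> (\<forall>x\<in>D k. \<forall>v\<in>V. \<sigma> x *v v = v)" for k
  obtain n where "D n = {\<one>}"
    using solvable_G solvable_iff_trivial_derived_seq unfolding D_def by blast
  then have "acts_trivially n" by (simp add: acts_trivially_def rep_one)
  define m where "m = (LEAST k. acts_trivially k)"
  have m: "acts_trivially m" using LeastI[of acts_trivially n] \<open>acts_trivially n\<close> m_def by simp
  have "\<not> acts_trivially 0" using nontrivial by (auto simp: acts_trivially_def D_def)
  then have "m \<noteq> 0" using m by (intro notI) simp
  then have not_m1: "\<not> acts_trivially (m - 1)" using not_less_Least[of "m - 1" acts_trivially] m_def by simp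
  define N where "N = D (m - 1)"
  have D_m: "D m = derived G N" using \<open>m \<noteq> 0\<close> by (cases m) (simp_all add: D_def N_def)
  have N_G: "N \<subseteq> carrier G" unfolding N_def D_def by (rule exp_of_derived_in_carrier) simp
  have "D k \<lhd> G" for k
    by (induct k) (simp_all add: D_def normal_self derived_is_normal)
  moreover have "normalized_by \<sigma> N h"
    unfolding N_def D_def by (rule normalized_by_derived_seq[OF h_normalizes])
  moreover have "\<sigma> x *v (\<sigma> y *v v) = \<sigma> y *v (\<sigma> x *v v)" if "x \<in> N" "y \<in> N" "v \<in> V" for x y v
    by (rule commute_if_derived_acts_trivially[OF N_G _ _ that])
      (use rep_V N_G m D_m in \<open>auto simp: acts_trivially_def\<close>)
  moreover have "\<exists>x\<in>N. \<exists>v\<in>V. \<sigma> x *v v \<noteq> v" using not_m1 by (auto simp: acts_trivially_def N_def)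
  ultimately show thesis using that N_def by blast
qed

lemma fixed_vector_if_neg_scalar:
  assumes x: "x \<in> carrier G" and neg: "\<And>v. v \<in> V \<Longrightarrow> \<sigma> x *v v = - v"
  shows "\<exists>k\<in>carrier G. \<exists>v\<in>V. v \<noteq> 0 \<and> \<sigma> k *v (h *v v) = v"
proof -
  obtain v where v: "v \<in> V" "v \<noteq> 0" "h *v v = v \<or> h *v v = - v"
    using commuting_finite_order_common_pm_eigenvector[of "{h}" V]
      subspace_V odd_dim_V h_V h_finite_order by auto
  then consider "h *v v = v" | "\<sigma> x *v (h *v v) = v"
    using neg by (auto simp: matrix_vector_mult_uminus)
  then show ?thesis
  proof cases
    case 1
    then show ?thesis using v by (intro bexI[of _ \<one>]) (auto simp: rep_one)
  next
    case 2
    then show ?thesis using v x by (intro bexI[of _ x]) auto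
  qed
qed

lemma twisted_odd_irrep_stabilizer:
  assumes W: "subspace W" "odd (dim W)" and c: "c \<in> carrier G"
    and c_h_W: "\<And>w. w \<in> W \<Longrightarrow> \<sigma> c *v (h *v w) \<in> W"
    and irreducible_W: "\<And>U. subspace U \<Longrightarrow> U \<subseteq> W
      \<Longrightarrow> (\<And>b u. b \<in> subspace_stabilizer W \<Longrightarrow> u \<in> U \<Longrightarrow> \<sigma> b *v u \<in> U) \<Longrightarrow> U = {0} \<or> U = W"
    and nontrivial_W: "\<exists>b\<in>subspace_stabilizer W. \<exists>w\<in>W. \<sigma> b *v w \<noteq> w"
  shows "twisted_odd_irrep (G\<lparr>carrier := subspace_stabilizer W\<rparr>) \<sigma> W (\<sigma> c ** h)"
proof -
  have B: "subgroup (subspace_stabilizer W) G"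
    by (rule subgroup_subspace_stabilizer[OF finite_carrier])
  have g_W: "(\<sigma> c ** h) *v w \<in> W" if "w \<in> W" for w
    using c_h_W[OF that] by (simp add: matrix_vector_mul_assoc)
  have "solvable (G\<lparr>carrier := subspace_stabilizer W\<rparr>)"
    using group_hom.inj_hom_imp_solvable[OF canonical_inj_is_hom[OF B]] solvable_G by simp
  moreover have "finite (subspace_stabilizer W)"
    using finite_subset[OF subgroup.subset[OF B] finite_carrier] .
  moreover have "normalized_by \<sigma> (subspace_stabilizer W) (\<sigma> c ** h)"
    using normalized_by_subspace_stabilizer[OF normalized_by_twist[OF h_normalizes c]
        twisted_has_finite_order[OF finite_carrier h_finite_order h_normalizes c] g_W] .
  ultimately show ?thesis
    using matrix_rep_subgroup[OF B] W irreducible_W nontrivial_W g_W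
      twisted_has_finite_order[OF finite_carrier h_finite_order h_normalizes c]
    by (intro twisted_odd_irrep.intro irrep_on.intro irrep_on_axioms.intro
        twisted_odd_irrep_axioms.intro) (auto simp: subspace_stabilizer_def)
qed

lemma fixed_vector_from_stabilizer:
  assumes "\<exists>k\<in>carrier (G\<lparr>carrier := subspace_stabilizer W\<rparr>). \<exists>w\<in>W. w \<noteq> 0 \<and> \<sigma> k *v ((\<sigma> c ** h) *v w) = w"
    and "W \<subseteq> V" and "c \<in> carrier G"
  shows "\<exists>k\<in>carrier G. \<exists>v\<in>V. v \<noteq> 0 \<and> \<sigma> k *v (h *v v) = v"
proof -
  obtain b w where bw: "b \<in> subspace_stabilizer W" "w \<in> W" "w \<noteq> 0"
    "\<sigma> b *v ((\<sigma> c ** h) *v w) = w"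
    using assms(1) by auto
  have "b \<in> carrier G" using bw(1) by (simp add: subspace_stabilizer_def)
  then have "\<sigma> (b \<otimes> c) *v (h *v w) = w"
    using bw(4) assms(3) by (simp add: rep_mult matrix_vector_mul_assoc matrix_mul_assoc)
  then show ?thesis
    using bw(2,3) assms(2,3) \<open>b \<in> carrier G\<close> by (intro bexI[of _ "b \<otimes> c"]) auto
qed

lemma fixed_vector_by_reduction:
  assumes IH: "\<And>(H :: ('a, 'b) monoid_scheme) W g. dim W < dim V \<Longrightarrow> twisted_odd_irrep H \<sigma> W g
    \<Longrightarrow> \<exists>k\<in>carrier H. \<exists>w\<in>W. w \<noteq> 0 \<and> \<sigma> k *v (g *v w) = w"
  shows "\<exists>k\<in>carrier G. \<exists>v\<in>V. v \<noteq> 0 \<and> \<sigma> k *v (h *v v) = v"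
proof -
  obtain N where N: "N \<lhd> G" "normalized_by \<sigma> N h"
    "\<And>x y v. x \<in> N \<Longrightarrow> y \<in> N \<Longrightarrow> v \<in> V \<Longrightarrow> \<sigma> x *v (\<sigma> y *v v) = \<sigma> y *v (\<sigma> x *v v)"
    "\<exists>x\<in>N. \<exists>v\<in>V. \<sigma> x *v v \<noteq> v"
    using exists_normal_subgroup_acting_abelian by blast
  interpret sign_weights G \<sigma> V N by intro_locales (simp add: sign_weights_axioms_def N(1))
  obtain l where l: "l \<in> N \<rightarrow>\<^sub>E {1, -1}" "odd (dim (weight_space l))"
    "span (\<Union> (weight_space ` char_orbit l)) = V"
    using odd_weight_space[OF odd_dim_V N(3)] by blast
  define W where "W = weight_space l"
  have l_ext: "l \<in> extensional N" using l(1) by (simp add: PiE_iff)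
  have W: "subspace W" "W \<subseteq> V" by (simp_all add: W_def subspace_weight_space weight_space_subset)
  have W_nonzero: "\<not> W \<subseteq> {0}" using l(2) unfolding W_def by (metis dim_eq_0 odd_pos less_irrefl)
  obtain x1 where x1: "x1 \<in> N" "l x1 = -1" using sign_char_takes_neg[OF l(1,3) N(4)] by blast
  have x1_W: "\<sigma> x1 *v w = - w" if "w \<in> W" for w using that x1 by (simp add: W_def weight_space_def)
  obtain a where a: "a \<in> carrier G" "\<And>w. w \<in> W \<Longrightarrow> \<sigma> (inv a) *v (h *v w) \<in> W"
    using twist_stabilizes_weight_space[OF N(2) h_V h_finite_order l_ext _ l(3)] W_nonzero
    unfolding W_def by blast
  show ?thesis
  proof (cases "W = V")
    case True
    show ?thesis by (rule fixed_vector_if_neg_scalar[OF N_carrier[OF x1(1)] x1_W[unfolded True]])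
  next
    case False
    have "span W \<subset> span V" using W False subspace_V by (simp add: span_eq_iff[THEN iffD2] psubset_eq)
    then have dim_W: "dim W < dim V" by (rule dim_psubset)
    have "twisted_odd_irrep (G\<lparr>carrier := subspace_stabilizer W\<rparr>) \<sigma> W (\<sigma> (inv a) ** h)"
    proof (rule twisted_odd_irrep_stabilizer)
      show "odd (dim W)" using l(2) by (simp add: W_def)
      show "\<And>U. subspace U \<Longrightarrow> U \<subseteq> W \<Longrightarrow> (\<And>b u. b \<in> subspace_stabilizer W \<Longrightarrow> u \<in> U \<Longrightarrow> \<sigma> b *v u \<in> U)
          \<Longrightarrow> U = {0} \<or> U = W"
        unfolding W_def by (rule stabilizer_irreducible_on_weight_space[OF l_ext])
      obtain w where w: "w \<in> W" "w \<noteq> 0" using W_nonzero by blast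
      have "x1 \<in> subspace_stabilizer W"
        using x1_W subspace_neg[OF W(1)] N_carrier[OF x1(1)] by (auto simp: subspace_stabilizer_def)
      moreover have "w \<noteq> - w" using w(2) by (simp add: eq_neg_iff_add_eq_0 scaleR_2[symmetric])
      then have "\<sigma> x1 *v w \<noteq> w" using x1_W[OF w(1)] by metis
      ultimately show "\<exists>b\<in>subspace_stabilizer W. \<exists>w\<in>W. \<sigma> b *v w \<noteq> w"
        using w(1) by (intro bexI[of _ x1]) auto
    qed (use a W in auto)
    from IH[OF dim_W this] show ?thesis
      by (rule fixed_vector_from_stabilizer[OF _ W(2) inv_closed[OF a(1)]])
  qed
qed

end

lemma twisted_odd_irrep_fixed_vector:
  "twisted_odd_irrep G \<sigma> V h \<Longrightarrow> \<exists>k\<in>carrier G. \<exists>v\<in>V. v \<noteq> 0 \<and> \<sigma> k *v (h *v v) = v"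
proof (induction "dim V" arbitrary: G V h rule: less_induct)
  case less
  show ?case by (rule twisted_odd_irrep.fixed_vector_by_reduction[OF less.prems less.hyps])
qed

lemma matrix_inv_mult:
  assumes "invertible (A :: real^'n^'n)"
  shows "A ** matrix_inv A = mat 1" and "matrix_inv A ** A = mat 1"
  using someI_ex[OF assms[unfolded invertible_def]] by (simp_all add: matrix_inv_def)

lemma matrix_rep_if_real_rep:
  fixes G :: "('a, 'b) monoid_scheme" (structure)
  assumes "group G" and "real_rep G \<sigma>"
  shows "matrix_rep G \<sigma>"
proof -
  interpret group G by fact
  have mult: "\<sigma> (x \<otimes> y) = \<sigma> x ** \<sigma> y" if "x \<in> carrier G" "y \<in> carrier G" for x y
    using assms(2) that by (simp add: real_rep_def)
  have "invertible (\<sigma> \<one>)" using assms(2) by (simp add: real_rep_def)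
  note inv_one = matrix_inv_mult(2)[OF this]
  have idem: "\<sigma> \<one> ** \<sigma> \<one> = \<sigma> \<one>" using mult[of \<one> \<one>] by simp
  have "\<sigma> \<one> = (matrix_inv (\<sigma> \<one>) ** \<sigma> \<one>) ** \<sigma> \<one>" by (simp add: inv_one)
  also have "\<dots> = matrix_inv (\<sigma> \<one>) ** (\<sigma> \<one> ** \<sigma> \<one>)" by (rule matrix_mul_assoc[symmetric])
  also have "\<dots> = mat 1" by (simp only: idem inv_one)
  finally show ?thesis using mult by (intro matrix_rep.intro matrix_rep_axioms.intro) (simp_all add: assms(1))
qed

lemma normalized_by_if_in_normalizer_GL:
  assumes "in_normalizer_GL G \<sigma> m"
  shows "normalized_by \<sigma> (carrier G) m"
  unfolding normalized_by_def
proof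
  fix k assume "k \<in> carrier G"
  then obtain k' where k': "k' \<in> carrier G" "\<sigma> k = m ** \<sigma> k' ** matrix_inv m"
    using assms unfolding in_normalizer_GL_def by (metis (no_types, lifting) imageE imageI)
  have "invertible m" using assms by (simp add: in_normalizer_GL_def)
  then have "\<sigma> k ** m = m ** \<sigma> k'"
    using k'(2) matrix_inv_mult(2)[of m] by (simp add: matrix_mul_assoc[symmetric])
  then show "\<exists>k'\<in>carrier G. \<sigma> k ** m = m ** \<sigma> k'" using k'(1) by blast
qed

lemma twisted_odd_irrep_UNIV:
  fixes \<sigma> :: "'a \<Rightarrow> real^'n^'n"
  assumes "group G" "finite (carrier G)" "solvable G" "odd CARD('n)"
    and "real_rep G \<sigma>" "irreducible_rep G \<sigma>" "nontrivial_rep G \<sigma>"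
    and "in_normalizer_GL G \<sigma> m" "has_finite_order m"
  shows "twisted_odd_irrep G \<sigma> UNIV m"
proof -
  obtain k where "k \<in> carrier G" "\<sigma> k \<noteq> mat 1" using assms(7) by (auto simp: nontrivial_rep_def)
  then have "\<exists>x\<in>carrier G. \<exists>v\<in>UNIV. \<sigma> x *v v \<noteq> v" by (metis matrix_eq matrix_vector_mul_lid UNIV_I)
  then show ?thesis
    using assms matrix_rep_if_real_rep normalized_by_if_in_normalizer_GL
    by (intro twisted_odd_irrep.intro irrep_on.intro irrep_on_axioms.intro twisted_odd_irrep_axioms.intro)
      (auto simp: irreducible_rep_def)
qed

theorem corollary3p2p4:
  fixes G :: "('a, 'b) monoid_scheme"
  assumes "group G" and "finite (carrier G)" and "solvable G"
  shows "eigenvalue_one_property_dim G TYPE('n::finite)"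
  unfolding eigenvalue_one_property_dim_def
proof (intro impI allI)
  fix \<sigma> :: "'a \<Rightarrow> real^'n^'n" and m :: "real^'n^'n"
  assume "odd CARD('n)"
    and "real_rep G \<sigma> \<and> irreducible_rep G \<sigma> \<and> nontrivial_rep G \<sigma> \<and> in_normalizer_GL G \<sigma> m
      \<and> has_finite_order m"
  then have "twisted_odd_irrep G \<sigma> UNIV m" using assms twisted_odd_irrep_UNIV by blast
  then obtain k v where "k \<in> carrier G" "v \<noteq> 0" "\<sigma> k *v (m *v v) = v"
    using twisted_odd_irrep_fixed_vector by blast
  then show "\<exists>k\<in>carrier G. has_eigenvalue_one (\<sigma> k ** m)"
    by (auto simp: has_eigenvalue_one_def matrix_vector_mul_assoc)
qed

end
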